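(* Let $R$ be a unital commutative ring and $g\in\mathrm{SL}_d(R)$, and let \[ \mathbf{L}_g(R)=\{(w,\,g^{-1}\theta(w)g):w\in\mathbf{H}_{\tau(g)}(R)\}. \] Then $\mathbf{L}_g(R)$ is a subgroup of $\mathrm{SO}_Q(R)\times\mathrm{ASL}_{d-1}(R)$, and it is exactly the stabilizer of $g$ under the right action $g\cdot(\rho,\eta)=\theta(\rho)^{-1}g\eta$ of $\mathrm{SO}_Q(R)\times\mathrm{ASL}_{d-1}(R)$ on $\mathrm{SL}_d(R)$.
   Context: $Q(\mathbf{x})=\mathbf{x}^tM\mathbf{x}$ with $M\in M_d(\mathbb{Z})$ symmetric (integral quadratic form), $\mathrm{SO}_Q(R)=\{h\in\mathrm{SL}_d(R):h^tMh=M\}$, and for $\mathbf{v}\in R^d$, $\mathbf{H}_{\mathbf{v}}(R)=\{h\in\mathrm{SO}_Q(R):h\mathbf{v}=\mathbf{v}\}$. $\theta(g)=(g^t)^{-1}$, $\tau(g)=\theta(g)\mathbf{e}_d$. $\mathrm{ASL}_{d-1}(R)\le\mathrm{SL}_d(R)$ is the group of matrices $\begin{pmatrix}m&\mathbf{w}\\ \mathbf{0}&1\end{pmatrix}$, $m\in\mathrm{SL}_{d-1}(R)$, $\mathbf{w}\in R^{d-1}$. *)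

theory Defs
  imports "Jordan_Normal_Form.Determinant"
begin

(* Matrices over a unital commutative ring 'a, using Jordan_Normal_Form's 'a mat.
   Indices are 0-based: e_d is unit_vec d (d - 1). *)

definition SL :: "nat \<Rightarrow> 'a::comm_ring_1 mat set" where
  "SL d = {g \<in> carrier_mat d d. det g = 1}"

definition mat_inverse :: "'a::comm_ring_1 mat \<Rightarrow> 'a mat" where
  "mat_inverse A = (SOME B. B \<in> carrier_mat (dim_row A) (dim_row A)
                         \<and> A * B = 1\<^sub>m (dim_row A) \<and> B * A = 1\<^sub>m (dim_row A))"

(* SO_Q(R) for Q(x) = x^t M x, M an integral matrix, viewed over R *)
definition SO_Q :: "nat \<Rightarrow> int mat \<Rightarrow> 'a::comm_ring_1 mat set" where
  "SO_Q d M = {h \<in> SL d. transpose_mat h * map_mat of_int M * h = map_mat of_int M}"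

definition H_stab :: "nat \<Rightarrow> int mat \<Rightarrow> 'a::comm_ring_1 vec \<Rightarrow> 'a mat set" where
  "H_stab d M v = {h \<in> SO_Q d M. h *\<^sub>v v = v}"

definition theta :: "'a::comm_ring_1 mat \<Rightarrow> 'a mat" where
  "theta g = mat_inverse (transpose_mat g)"

definition tau :: "'a::comm_ring_1 mat \<Rightarrow> 'a vec" where
  "tau g = theta g *\<^sub>v unit_vec (dim_row g) (dim_row g - 1)"

(* ASL_n(R) inside SL_{n+1}(R): block matrices (m w; 0 1) *)
definition ASL :: "nat \<Rightarrow> 'a::comm_ring_1 mat set" where
  "ASL n = {four_block_mat m w (0\<^sub>m 1 n) (1\<^sub>m 1) | m w.
              m \<in> carrier_mat n n \<and> det m = 1 \<and> w \<in> carrier_mat n 1}"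

definition L_grp :: "nat \<Rightarrow> int mat \<Rightarrow> 'a::comm_ring_1 mat \<Rightarrow> ('a mat \<times> 'a mat) set" where
  "L_grp d M g = {(w, mat_inverse g * theta w * g) | w. w \<in> H_stab d M (tau g)}"

definition act :: "'a::comm_ring_1 mat \<Rightarrow> 'a mat \<times> 'a mat \<Rightarrow> 'a mat" where
  "act g p = mat_inverse (theta (fst p)) * g * snd p"

definition stabilizer :: "nat \<Rightarrow> int mat \<Rightarrow> 'a::comm_ring_1 mat \<Rightarrow> ('a mat \<times> 'a mat) set" where
  "stabilizer d M g = {p \<in> SO_Q d M \<times> ASL (d - 1). act g p = g}"

end

theory Submission
  imports Defs
begin

(* Since theta is an automorphism of SL_d, the map w \<mapsto> g\<^sup>-\<^sup>1 theta(w) g is a homomorphism,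
   and L_g is the graph of its restriction to the subgroup H_tau(g), hence a subgroup.
   The last row of g\<^sup>-\<^sup>1 theta(w) g is the unit row e_d\<^sup>T exactly when
   g\<^sup>T w\<^sup>-\<^sup>1 theta(g) e_d = e_d, i.e. when w fixes tau(g) = theta(g) e_d; this is what
   places the second component in ASL_(d-1).  Finally theta(rho)\<^sup>-\<^sup>1 g eta = g says exactly
   eta = g\<^sup>-\<^sup>1 theta(rho) g, so the stabilizer is the same graph. *)

lemma SL_carrier: "A \<in> SL n \<Longrightarrow> A \<in> carrier_mat n n"
  unfolding SL_def by simp

lemma SL_one: "1\<^sub>m n \<in> SL n"
  unfolding SL_def by simp

lemma SL_mult: "A \<in> SL n \<Longrightarrow> B \<in> SL n \<Longrightarrow> A * B \<in> SL n"
  unfolding SL_def by (auto simp: det_mult)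

lemma SL_transpose: "A \<in> SL n \<Longrightarrow> transpose_mat A \<in> SL n"
  unfolding SL_def by (auto simp: det_transpose)

lemma SL_mat_inverse:
  assumes "A \<in> SL n"
  shows "mat_inverse A \<in> SL n" "A * mat_inverse A = 1\<^sub>m n" "mat_inverse A * A = 1\<^sub>m n"
proof -
  have A: "A \<in> carrier_mat n n" "det A = 1"
    using assms unfolding SL_def by auto
  have "\<exists>B. B \<in> carrier_mat n n \<and> A * B = 1\<^sub>m n \<and> B * A = 1\<^sub>m n"
    using adj_mat[OF A(1)] A(2) by (intro exI[of _ "adj_mat A"]) auto
  then have inv: "mat_inverse A \<in> carrier_mat n n" "A * mat_inverse A = 1\<^sub>m n" "mat_inverse A * A = 1\<^sub>m n"
    unfolding mat_inverse_def using A(1) by (auto dest!: someI_ex)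
  then show "A * mat_inverse A = 1\<^sub>m n" "mat_inverse A * A = 1\<^sub>m n"
    by simp_all
  have "det A * det (mat_inverse A) = 1"
    using det_mult[OF A(1) inv(1)] inv(2) by simp
  then show "mat_inverse A \<in> SL n"
    using inv(1) A(2) unfolding SL_def by simp
qed

lemma SL_mat_inverse_cancel [simp]:
  assumes "A \<in> SL n" "X \<in> carrier_mat n m"
  shows "A * (mat_inverse A * X) = X" "mat_inverse A * (A * X) = X"
  using assms SL_mat_inverse[OF assms(1)] SL_carrier[of "mat_inverse A"] SL_carrier[of A]
  by (simp_all flip: assoc_mult_mat[of _ n n _ n _ m])

lemma SL_mult_eq_iff:
  assumes "A \<in> SL n" "X \<in> carrier_mat n m" "Y \<in> carrier_mat n m"
  shows "A * X = Y \<longleftrightarrow> X = mat_inverse A * Y"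
  using assms by auto

lemma SL_mult_mat_vec_eq_iff:
  assumes "A \<in> SL n" "x \<in> carrier_vec n" "y \<in> carrier_vec n"
  shows "A *\<^sub>v x = y \<longleftrightarrow> x = mat_inverse A *\<^sub>v y"
proof -
  have "A *\<^sub>v (mat_inverse A *\<^sub>v y) = y" "mat_inverse A *\<^sub>v (A *\<^sub>v x) = x"
    using assms SL_mat_inverse[OF assms(1)] SL_carrier[of "mat_inverse A"] SL_carrier[of A]
    by (simp_all flip: assoc_mult_mat_vec[of _ n n _ n])
  then show ?thesis
    by auto
qed

lemma SL_mat_inverse_eqI:
  assumes "A \<in> SL n" "B \<in> carrier_mat n n" "A * B = 1\<^sub>m n"
  shows "mat_inverse A = B"
proof -
  have "B = mat_inverse A * 1\<^sub>m n"
    using SL_mult_eq_iff[OF assms(1,2), of "1\<^sub>m n"] assms(3) by simp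
  then show ?thesis
    using SL_carrier[OF SL_mat_inverse(1)[OF assms(1)]] by simp
qed

lemma SL_mat_inverse_mult:
  assumes "A \<in> SL n" "B \<in> SL n"
  shows "mat_inverse (A * B) = mat_inverse B * mat_inverse A"
proof (rule SL_mat_inverse_eqI)
  note carriers = SL_carrier[OF assms(1)] SL_carrier[OF assms(2)]
    SL_carrier[OF SL_mat_inverse(1)[OF assms(1)]] SL_carrier[OF SL_mat_inverse(1)[OF assms(2)]]
  show "A * B \<in> SL n" "mat_inverse B * mat_inverse A \<in> carrier_mat n n"
    using assms carriers by (auto intro: SL_mult)
  have "A * B * (mat_inverse B * mat_inverse A) = A * (B * (mat_inverse B * mat_inverse A))"
    using carriers by (simp add: assoc_mult_mat[of _ n n _ n _ n] mult_carrier_mat[of _ n n])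
  also have "\<dots> = A * mat_inverse A"
    using assms(2) carriers(3) by simp
  finally show "A * B * (mat_inverse B * mat_inverse A) = 1\<^sub>m n"
    using SL_mat_inverse(2)[OF assms(1)] by simp
qed

lemma SL_mat_inverse_transpose:
  assumes "A \<in> SL n"
  shows "mat_inverse (transpose_mat A) = transpose_mat (mat_inverse A)"
proof (rule SL_mat_inverse_eqI)
  note carriers = SL_carrier[OF assms] SL_carrier[OF SL_mat_inverse(1)[OF assms]]
  show "transpose_mat A \<in> SL n" "transpose_mat (mat_inverse A) \<in> carrier_mat n n"
    using assms carriers by (auto intro: SL_transpose)
  show "transpose_mat A * transpose_mat (mat_inverse A) = 1\<^sub>m n"
    using carriers SL_mat_inverse(3)[OF assms] by (simp flip: transpose_mult)
qed

lemma theta_eq_transpose_mat_inverse: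
  "A \<in> SL n \<Longrightarrow> theta A = transpose_mat (mat_inverse A)"
  unfolding theta_def by (rule SL_mat_inverse_transpose)

lemma theta_SL: "A \<in> SL n \<Longrightarrow> theta A \<in> SL n"
  unfolding theta_def by (intro SL_mat_inverse(1) SL_transpose)

lemma transpose_theta: "A \<in> SL n \<Longrightarrow> transpose_mat (theta A) = mat_inverse A"
  by (simp add: theta_eq_transpose_mat_inverse)

lemma mat_inverse_theta:
  assumes "A \<in> SL n"
  shows "mat_inverse (theta A) = transpose_mat A"
proof (rule SL_mat_inverse_eqI)
  show "theta A \<in> SL n" "transpose_mat A \<in> carrier_mat n n"
    using assms by (auto intro: theta_SL SL_carrier)
  have "theta A * transpose_mat A = transpose_mat (A * mat_inverse A)"
    using assms SL_carrier[OF assms] SL_carrier[OF SL_mat_inverse(1)[OF assms]]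
    by (simp add: theta_eq_transpose_mat_inverse transpose_mult)
  then show "theta A * transpose_mat A = 1\<^sub>m n"
    using SL_mat_inverse(2)[OF assms] by simp
qed

lemma theta_one: "theta (1\<^sub>m n) = 1\<^sub>m n"
  unfolding theta_def by (rule SL_mat_inverse_eqI) (auto intro: SL_one)

lemma theta_mult:
  assumes "A \<in> SL n" "B \<in> SL n"
  shows "theta (A * B) = theta A * theta B"
proof -
  have "transpose_mat (A * B) = transpose_mat B * transpose_mat A"
    by (rule transpose_mult[OF SL_carrier[OF assms(1)] SL_carrier[OF assms(2)]])
  then show ?thesis
    unfolding theta_def using SL_mat_inverse_mult[OF SL_transpose[OF assms(2)] SL_transpose[OF assms(1)]]
    by simp
qed

definition theta_conj :: "'a::comm_ring_1 mat \<Rightarrow> 'a mat \<Rightarrow> 'a mat" where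
  "theta_conj g w = mat_inverse g * theta w * g"

lemma theta_conj_SL: "g \<in> SL n \<Longrightarrow> w \<in> SL n \<Longrightarrow> theta_conj g w \<in> SL n"
  unfolding theta_conj_def by (intro SL_mult SL_mat_inverse(1) theta_SL)

lemma theta_conj_one:
  assumes "g \<in> SL n"
  shows "theta_conj g (1\<^sub>m n) = 1\<^sub>m n"
  unfolding theta_conj_def theta_one
  using SL_carrier[OF SL_mat_inverse(1)[OF assms]] SL_mat_inverse(3)[OF assms] by simp

lemma theta_conj_mult:
  assumes "g \<in> SL n" "a \<in> SL n" "b \<in> SL n"
  shows "theta_conj g (a * b) = theta_conj g a * theta_conj g b"
proof -
  note carriers = SL_carrier[OF assms(1)] SL_carrier[OF SL_mat_inverse(1)[OF assms(1)]]
    SL_carrier[OF theta_SL[OF assms(2)]] SL_carrier[OF theta_SL[OF assms(3)]]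
  have cancel: "g * (mat_inverse g * (theta b * g)) = theta b * g"
    using assms(1) carriers by (intro SL_mat_inverse_cancel) auto
  have "theta_conj g a * theta_conj g b
      = mat_inverse g * (theta a * (g * (mat_inverse g * (theta b * g))))"
    unfolding theta_conj_def using carriers
    by (simp add: assoc_mult_mat[of _ n n _ n _ n] mult_carrier_mat[of _ n n])
  also have "\<dots> = theta_conj g (a * b)"
    unfolding cancel theta_conj_def theta_mult[OF assms(2,3)] using carriers
    by (simp add: assoc_mult_mat[of _ n n _ n _ n] mult_carrier_mat[of _ n n])
  finally show ?thesis ..
qed

lemma theta_conj_mat_inverse:
  assumes "g \<in> SL n" "a \<in> SL n"
  shows "mat_inverse (theta_conj g a) = theta_conj g (mat_inverse a)"
proof (rule SL_mat_inverse_eqI)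
  note inv = SL_mat_inverse[OF assms(2)]
  show "theta_conj g a \<in> SL n" "theta_conj g (mat_inverse a) \<in> carrier_mat n n"
    using assms inv(1) by (auto intro: theta_conj_SL SL_carrier)
  show "theta_conj g a * theta_conj g (mat_inverse a) = 1\<^sub>m n"
    using theta_conj_mult[OF assms inv(1)] theta_conj_one[OF assms(1)] inv(2) by simp
qed

lemma transpose_theta_conj:
  assumes "g \<in> SL n" "w \<in> SL n"
  shows "transpose_mat (theta_conj g w) = transpose_mat g * (mat_inverse w * theta g)"
proof -
  note carriers = SL_carrier[OF assms(1)] SL_carrier[OF SL_mat_inverse(1)[OF assms(1)]]
    SL_carrier[OF theta_SL[OF assms(2)]]
  have "transpose_mat (theta_conj g w)
      = transpose_mat g * (transpose_mat (theta w) * transpose_mat (mat_inverse g))"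
    unfolding theta_conj_def using carriers
    by (simp add: transpose_mult[of _ n n _ n] mult_carrier_mat[of _ n n])
  then show ?thesis
    using assms by (simp add: transpose_theta flip: theta_eq_transpose_mat_inverse)
qed

lemma det_four_block_mat_lower_left_zero_row:
  fixes A :: "'a::comm_ring_1 mat"
  assumes "A \<in> carrier_mat n n" "B \<in> carrier_mat n 1" "D \<in> carrier_mat 1 1"
  shows "det (four_block_mat A B (0\<^sub>m 1 n) D) = det A * det D"
proof -
  let ?E = "four_block_mat A B (0\<^sub>m 1 n) D"
  have "transpose_mat ?E = four_block_mat (transpose_mat A) (0\<^sub>m n 1) (transpose_mat B) (transpose_mat D)"
    using assms by (subst transpose_four_block_mat) auto
  then have "det (transpose_mat ?E) = det (transpose_mat A) * det (transpose_mat D)"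
    using assms by (simp add: det_four_block_mat_upper_right_zero_col)
  moreover have "?E \<in> carrier_mat (n + 1) (n + 1)"
    using four_block_carrier_mat[OF assms(1,3)] by simp
  ultimately show ?thesis
    using assms by (simp add: det_transpose)
qed

lemma ASL_iff: "E \<in> ASL n \<longleftrightarrow> E \<in> SL (Suc n) \<and> row E n = unit_vec (Suc n) n"
proof
  assume "E \<in> ASL n"
  then obtain m w where E: "E = four_block_mat m w (0\<^sub>m 1 n) (1\<^sub>m 1)"
    and m: "m \<in> carrier_mat n n" "det m = 1" and w: "w \<in> carrier_mat n 1"
    unfolding ASL_def by auto
  have "E \<in> carrier_mat (Suc n) (Suc n)" "det E = 1"
    unfolding E using four_block_carrier_mat[OF m(1) one_carrier_mat[of 1]]
      det_four_block_mat_lower_left_zero_row[OF m(1) w one_carrier_mat] m(2) by simp_all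
  moreover have "row E n = unit_vec (Suc n) n"
    unfolding E using m w by (auto simp: vec_eq_iff)
  ultimately show "E \<in> SL (Suc n) \<and> row E n = unit_vec (Suc n) n"
    unfolding SL_def by simp
next
  assume E: "E \<in> SL (Suc n) \<and> row E n = unit_vec (Suc n) n"
  then have carrier: "E \<in> carrier_mat (n + 1) (n + 1)" and "det E = 1"
    unfolding SL_def by auto
  have last_row: "E $$ (n, j) = (if j = n then 1 else 0)" if "j < Suc n" for j
  proof -
    have "E $$ (n, j) = row E n $ j"
      using that carrier by simp
    also have "\<dots> = (if j = n then 1 else 0)"
      using E that by simp
    finally show ?thesis .
  qed
  obtain A1 A2 A3 A4 where split: "split_block E n n = (A1, A2, A3, A4)"
    by (cases "split_block E n n")
  note blocks = split_block[OF split carrier_matD[OF carrier]]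
  have "A3 = 0\<^sub>m 1 n" "A4 = 1\<^sub>m 1"
    using split last_row carrier unfolding split_block_def Let_def by auto
  then have E_blocks: "E = four_block_mat A1 A2 (0\<^sub>m 1 n) (1\<^sub>m 1)"
    using blocks by simp
  then have "det A1 = 1"
    using \<open>det E = 1\<close> det_four_block_mat_lower_left_zero_row[OF blocks(1,2) one_carrier_mat]
    by simp
  then show "E \<in> ASL n"
    unfolding ASL_def using E_blocks blocks by auto
qed

lemma mult_mat_vec_unit_vec:
  fixes A :: "'a::semiring_1 mat"
  assumes "A \<in> carrier_mat m k" "i < k"
  shows "A *\<^sub>v unit_vec k i = col A i"
  using assms by (auto simp: vec_eq_iff)

lemma tau_carrier: "g \<in> SL n \<Longrightarrow> tau g \<in> carrier_vec n"
  unfolding tau_def using SL_carrier[of g n] SL_carrier[OF theta_SL, of g n] by simp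

lemma theta_conj_in_ASL_iff:
  assumes g: "g \<in> SL (Suc n)" and w: "w \<in> SL (Suc n)"
  shows "theta_conj g w \<in> ASL n \<longleftrightarrow> w *\<^sub>v tau g = tau g"
proof -
  let ?e = "unit_vec (Suc n) n :: 'a vec"
  note carriers = SL_carrier[OF g] SL_carrier[OF theta_SL[OF g]] SL_carrier[OF SL_mat_inverse(1)[OF w]]
  have tau: "tau g = theta g *\<^sub>v ?e"
    unfolding tau_def using carriers by simp
  have "row (theta_conj g w) n = transpose_mat (theta_conj g w) *\<^sub>v ?e"
    using SL_carrier[OF theta_conj_SL[OF g w]] by (simp add: mult_mat_vec_unit_vec)
  also have "\<dots> = transpose_mat g *\<^sub>v (mat_inverse w *\<^sub>v tau g)"
    unfolding transpose_theta_conj[OF g w] tau using carriers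
    by (simp add: assoc_mult_mat_vec[of _ "Suc n" "Suc n" _ "Suc n"])
  finally have "row (theta_conj g w) n = ?e \<longleftrightarrow> mat_inverse w *\<^sub>v tau g = tau g"
    using SL_mult_mat_vec_eq_iff[OF SL_transpose[OF g], of "mat_inverse w *\<^sub>v tau g" ?e] carriers
    unfolding tau by (simp add: theta_def)
  also have "\<dots> \<longleftrightarrow> w *\<^sub>v tau g = tau g"
    using SL_mult_mat_vec_eq_iff[OF w tau_carrier[OF g] tau_carrier[OF g]] by auto
  finally show ?thesis
    using ASL_iff theta_conj_SL[OF g w] by blast
qed

lemma congruence_mult:
  fixes A :: "'a::comm_ring_1 mat"
  assumes "A \<in> carrier_mat n n" "B \<in> carrier_mat n n" "Q \<in> carrier_mat n n"
  shows "transpose_mat (A * B) * Q * (A * B) = transpose_mat B * (transpose_mat A * Q * A) * B"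
  using assms
  by (simp add: transpose_mult[of _ n n _ n] assoc_mult_mat[of _ n n _ n _ n] mult_carrier_mat[of _ n n])

lemma SO_Q_SL: "SO_Q d M \<subseteq> SL d"
  unfolding SO_Q_def by auto

lemma SO_Q_one: "M \<in> carrier_mat d d \<Longrightarrow> 1\<^sub>m d \<in> SO_Q d M"
  unfolding SO_Q_def by (simp add: SL_one)

lemma SO_Q_mult:
  assumes "M \<in> carrier_mat d d" "A \<in> SO_Q d M" "B \<in> SO_Q d M"
  shows "A * B \<in> SO_Q d M"
proof -
  have "A \<in> SL d" "B \<in> SL d"
    using assms SO_Q_SL by auto
  then show ?thesis
    using assms congruence_mult[OF SL_carrier SL_carrier, of A d B "map_mat of_int M"]
    unfolding SO_Q_def by (simp add: SL_mult)
qed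

lemma SO_Q_mat_inverse:
  assumes "M \<in> carrier_mat d d" "A \<in> SO_Q d M"
  shows "mat_inverse A \<in> SO_Q d M"
proof -
  let ?Q = "map_mat of_int M"
  have A: "A \<in> SL d" "transpose_mat A * ?Q * A = ?Q"
    using assms(2) unfolding SO_Q_def by auto
  have Q: "?Q \<in> carrier_mat d d"
    using assms(1) by simp
  note inv = SL_mat_inverse[OF A(1)]
  have "transpose_mat (mat_inverse A) * ?Q * mat_inverse A
      = transpose_mat (A * mat_inverse A) * ?Q * (A * mat_inverse A)"
    unfolding congruence_mult[OF SL_carrier[OF A(1)] SL_carrier[OF inv(1)] Q] A(2) ..
  also have "\<dots> = ?Q"
    using inv(2) Q by simp
  finally show ?thesis
    using inv(1) unfolding SO_Q_def by simp
qed

lemma H_stab_SL: "H_stab d M v \<subseteq> SL d"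
  unfolding H_stab_def using SO_Q_SL by auto

lemma H_stab_one: "M \<in> carrier_mat d d \<Longrightarrow> v \<in> carrier_vec d \<Longrightarrow> 1\<^sub>m d \<in> H_stab d M v"
  unfolding H_stab_def by (simp add: SO_Q_one)

lemma H_stab_mult:
  assumes "M \<in> carrier_mat d d" "v \<in> carrier_vec d" "A \<in> H_stab d M v" "B \<in> H_stab d M v"
  shows "A * B \<in> H_stab d M v"
proof -
  have "(A * B) *\<^sub>v v = A *\<^sub>v (B *\<^sub>v v)"
    using assms H_stab_SL SL_carrier by (meson assoc_mult_mat_vec subsetD)
  then show ?thesis
    using assms unfolding H_stab_def by (simp add: SO_Q_mult)
qed

lemma H_stab_mat_inverse:
  assumes "M \<in> carrier_mat d d" "v \<in> carrier_vec d" "A \<in> H_stab d M v"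
  shows "mat_inverse A \<in> H_stab d M v"
proof -
  have "A \<in> SL d" "A *\<^sub>v v = v"
    using assms(3) H_stab_SL unfolding H_stab_def by auto
  then have "mat_inverse A *\<^sub>v v = v"
    using SL_mult_mat_vec_eq_iff[OF _ assms(2) assms(2)] by metis
  then show ?thesis
    using assms unfolding H_stab_def by (simp add: SO_Q_mat_inverse)
qed

lemma act_eq_self_iff:
  assumes g: "g \<in> SL d" and r: "r \<in> SL d" and e: "e \<in> carrier_mat d d"
  shows "act g (r, e) = g \<longleftrightarrow> e = theta_conj g r"
proof -
  note carriers = SL_carrier[OF g] SL_carrier[OF r] SL_carrier[OF theta_SL[OF r]]
  have "act g (r, e) = transpose_mat r * (g * e)"
    unfolding act_def using mat_inverse_theta[OF r] carriers e by simp
  also have "\<dots> = g \<longleftrightarrow> g * e = theta r * g"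
    using SL_mult_eq_iff[OF SL_transpose[OF r], of "g * e" d g] carriers e
    by (simp add: theta_def)
  also have "\<dots> \<longleftrightarrow> e = theta_conj g r"
    unfolding theta_conj_def using SL_mult_eq_iff[OF g e, of "theta r * g"] carriers
    by (simp add: SL_carrier[OF SL_mat_inverse(1)[OF g]] assoc_mult_mat[of _ d d _ d _ d])
  finally show ?thesis .
qed

lemma L_grp_eq_image: "L_grp d M g = (\<lambda>w. (w, theta_conj g w)) ` H_stab d M (tau g)"
  unfolding L_grp_def theta_conj_def by auto

lemma stabilizer_iff:
  assumes g: "g \<in> SL (Suc n)"
  shows "(r, e) \<in> stabilizer (Suc n) M g \<longleftrightarrow> r \<in> H_stab (Suc n) M (tau g) \<and> e = theta_conj g r"
proof
  assume "(r, e) \<in> stabilizer (Suc n) M g"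
  then have r: "r \<in> SO_Q (Suc n) M" "r \<in> SL (Suc n)" and e: "e \<in> ASL n" "act g (r, e) = g"
    unfolding stabilizer_def using SO_Q_SL by auto
  then have "e = theta_conj g r"
    using act_eq_self_iff[OF g r(2)] SL_carrier by (auto simp: ASL_iff)
  then show "r \<in> H_stab (Suc n) M (tau g) \<and> e = theta_conj g r"
    using r e(1) theta_conj_in_ASL_iff[OF g r(2)] unfolding H_stab_def by auto
next
  assume "r \<in> H_stab (Suc n) M (tau g) \<and> e = theta_conj g r"
  then have r: "r \<in> SO_Q (Suc n) M" "r \<in> SL (Suc n)" "r *\<^sub>v tau g = tau g"
    and e: "e = theta_conj g r"
    unfolding H_stab_def using SO_Q_SL by auto
  have "act g (r, e) = g"
    using act_eq_self_iff[OF g r(2)] e SL_carrier[OF theta_conj_SL[OF g r(2)]] by blast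
  then show "(r, e) \<in> stabilizer (Suc n) M g"
    unfolding stabilizer_def using r e theta_conj_in_ASL_iff[OF g r(2)] by auto
qed

lemma stabilizer_eq_L_grp:
  "g \<in> SL (Suc n) \<Longrightarrow> stabilizer (Suc n) M g = L_grp (Suc n) M g"
  unfolding L_grp_eq_image by (auto simp: stabilizer_iff)

theorem lemma3p2:
  fixes d :: nat and M :: "int mat" and g :: "'a::comm_ring_1 mat"
  assumes "d \<ge> 1"
    and "M \<in> carrier_mat d d" and "transpose_mat M = M"
    and "g \<in> SL d"
  shows "L_grp d M g \<subseteq> SO_Q d M \<times> ASL (d - 1)
       \<and> (1\<^sub>m d, 1\<^sub>m d) \<in> L_grp d M g
       \<and> (\<forall>p \<in> L_grp d M g. \<forall>q \<in> L_grp d M g. (fst p * fst q, snd p * snd q) \<in> L_grp d M g)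
       \<and> (\<forall>p \<in> L_grp d M g. (mat_inverse (fst p), mat_inverse (snd p)) \<in> L_grp d M g)
       \<and> L_grp d M g = stabilizer d M g"
proof -
  obtain n where n: "d = Suc n"
    using assms(1) by (cases d) auto
  have stabilizer: "stabilizer d M g = L_grp d M g"
    using stabilizer_eq_L_grp assms(4) unfolding n by blast
  have v: "tau g \<in> carrier_vec d"
    using tau_carrier[OF assms(4)] .
  note H_SL = subsetD[OF H_stab_SL]
  have "L_grp d M g \<subseteq> SO_Q d M \<times> ASL (d - 1)"
    unfolding stabilizer[symmetric] stabilizer_def by auto
  moreover have "(1\<^sub>m d, 1\<^sub>m d) \<in> L_grp d M g"
    unfolding L_grp_eq_image using H_stab_one[OF assms(2) v] theta_conj_one[OF assms(4)] by force
  moreover have "(fst p * fst q, snd p * snd q) \<in> L_grp d M g"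
    if "p \<in> L_grp d M g" "q \<in> L_grp d M g" for p q
    using that H_stab_mult[OF assms(2) v] theta_conj_mult[OF assms(4) H_SL H_SL]
    unfolding L_grp_eq_image by auto
  moreover have "(mat_inverse (fst p), mat_inverse (snd p)) \<in> L_grp d M g"
    if "p \<in> L_grp d M g" for p
    using that H_stab_mat_inverse[OF assms(2) v] theta_conj_mat_inverse[OF assms(4) H_SL]
    unfolding L_grp_eq_image by auto
  ultimately show ?thesis
    using stabilizer by blast
qed

end
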